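(* Let $a>0$ and let $x$ be real with $x<a$. Then for every integer $r\ge0$, $$\psi^{(r)}(a-x)-\psi^{(r)}(a)=-\sum_{n=1}^\infty\frac1n\frac{(x)_n}{(a)_n}\,Y_r\!\left(-H_n^{(1)}(a),\,1!\,H_n^{(2)}(a),\dots,(-1)^r(r-1)!\,H_n^{(r)}(a)\right)$$ (for $r=0$ the left side is $\psi(a-x)-\psi(a)$ and $Y_0=1$), where the $j$-th argument of $Y_r$ is $(-1)^j(j-1)!\,H_n^{(j)}(a)$.
   Context: $\psi=\Gamma'/\Gamma$ is the digamma function and $\psi^{(r)}$ its $r$-th derivative. $(y)_n=y(y+1)\cdots(y+n-1)$. $H_n^{(j)}(a)=\sum_{k=0}^{n-1}(k+a)^{-j}$. Complete (exponential) Bell polynomials: $Y_0=1$ and for $r\ge1$, $Y_r(x_1,\dots,x_r)=\sum \frac{r!}{k_1!\cdots k_r!}\prod_{j=1}^r\left(\frac{x_j}{j!}\right)^{k_j}$, the sum over all tuples of nonnegative integers $(k_1,\dots,k_r)$ with $k_1+2k_2+\cdots+rk_r=r$. *)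

theory Defs
  imports "HOL-Analysis.Analysis"
begin

definition gen_harm :: "nat \<Rightarrow> nat \<Rightarrow> real \<Rightarrow> real" where
  "gen_harm n j a = (\<Sum>k<n. 1 / (real k + a) ^ j)"

text \<open>Complete exponential Bell polynomial Y_r(x_1,...,x_r); arguments indexed from 1.
  The sum ranges over tuples (k_1,...,k_r) of naturals with k_1 + 2 k_2 + ... + r k_r = r,
  represented as extensional functions on {1..r} (each k_j is automatically at most r).\<close>
definition bell_Y :: "nat \<Rightarrow> (nat \<Rightarrow> real) \<Rightarrow> real" where
  "bell_Y r x = (\<Sum>k \<in> {k \<in> PiE {1..r} (\<lambda>_. {..r}). (\<Sum>j=1..r. j * k j) = r}.
      fact r / (\<Prod>j=1..r. fact (k j)) * (\<Prod>j=1..r. (x j / fact j) ^ (k j)))"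

end

theory Submission
  imports Defs "HOL-Computational_Algebra.Formal_Power_Series"
begin

(*
  1. Bell polynomials: Y_r(y) is r! times the r-th coefficient of the generating function
     exp(sum_j y_j z^j / j!) (bell_Y_egf); differentiating it gives the recurrence
     Y_(r+1)(y) = sum_i C(r,i) y_(i+1) Y_(r-i)(y) (bell_Y_Suc).
  2. Since d/da y_j = y_(j+1) and d/da 1/(a)_n = y_1/(a)_n, the recurrence shows that the
     a-derivative of the r-th series term is the (r+1)-st one (series_term_deriv).
  3. The bounds |(x)_n|/(c)_n = O((c+n)^(x-c)) and H_n^(1)(c) = O((c+n)^eta) give a summable
     majorant valid for all a >= c (series_term_bound, majorant_summable), hence uniform
     convergence on {c<..} for every c > max 0 x (series_uniformly_convergent).
  4. r = 0: F(a) = sum_n (x)_n/(n (a)_n) satisfies F(a) - F(a+1) = 1/(a-x) - 1/a and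
     F(a+N) -> 0, so F(a) = psi(a) - psi(a-x) (polygamma_0_diff_sums).
  5. Termwise differentiation of the uniformly convergent series (series_termwise_deriv)
     carries the identity from r to r+1 (polygamma_diff_sums); the theorem is its unfolding.
*)

text \<open>HOL-Analysis uses \<open>$\<close> for vector components; here it denotes power series coefficients.\<close>

unbundle no vec_syntax
notation fps_nth (infixl "$" 75)


section \<open>Bell polynomials via their exponential generating function\<close>

text \<open>Two formal power series agree below \<open>N\<close>; this is compatible with products, so
  infinite factors may be replaced by polynomial truncations when computing coefficients.\<close>
definition fps_agree :: "nat \<Rightarrow> 'a::comm_semiring_1 fps \<Rightarrow> 'a fps \<Rightarrow> bool" where
  "fps_agree N f g \<longleftrightarrow> (\<forall>s<N. f $ s = g $ s)"

lemma fps_agree_refl: "fps_agree N f f"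
  by (simp add: fps_agree_def)

lemma fps_agree_mult:
  assumes "fps_agree N f f'" "fps_agree N g g'"
  shows "fps_agree N (f * g) (f' * g')"
  unfolding fps_agree_def fps_mult_nth
proof (intro allI impI sum.cong refl)
  fix s i assume "s < N" "i \<in> {0..s}"
  then show "f $ i * g $ (s - i) = f' $ i * g' $ (s - i)"
    using assms unfolding fps_agree_def by auto
qed

lemma fps_agree_prod:
  "finite A \<Longrightarrow> (\<And>j. j \<in> A \<Longrightarrow> fps_agree N (f j) (g j)) \<Longrightarrow>
     fps_agree N (\<Prod>j\<in>A. f j) (\<Prod>j\<in>A. g j)"
  by (induction A rule: finite_induct) (auto intro!: fps_agree_mult simp: fps_agree_refl)

lemma fps_const_prod: "fps_const (\<Prod>j\<in>A. f j) = (\<Prod>j\<in>A. fps_const (f j) :: 'a::comm_ring_1 fps)"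
  by (induction A rule: infinite_finite_induct) (auto simp: fps_const_mult[symmetric])

text \<open>The factor \<open>exp (y\<^sub>j z\<^sup>j / j!)\<close> of the generating function, its truncation to
  exponents \<open>i \<le> N\<close>, the generating function \<open>exp (\<Sum>j=1..m. y\<^sub>j z\<^sup>j / j!)\<close> and
  its logarithmic derivative.\<close>
definition bell_factor :: "(nat \<Rightarrow> real) \<Rightarrow> nat \<Rightarrow> real fps" where
  "bell_factor y j =
     Abs_fps (\<lambda>s. if j dvd s then (y j / fact j) ^ (s div j) / fact (s div j) else 0)"

definition bell_factor_trunc :: "(nat \<Rightarrow> real) \<Rightarrow> nat \<Rightarrow> nat \<Rightarrow> real fps" where
  "bell_factor_trunc y j N = (\<Sum>i\<le>N. fps_const ((y j / fact j) ^ i / fact i) * fps_X ^ (j * i))"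

definition bell_egf :: "(nat \<Rightarrow> real) \<Rightarrow> nat \<Rightarrow> real fps" where
  "bell_egf y m = (\<Prod>j\<in>{1..m}. bell_factor y j)"

definition bell_log_deriv :: "(nat \<Rightarrow> real) \<Rightarrow> nat \<Rightarrow> real fps" where
  "bell_log_deriv y m = (\<Sum>j\<in>{1..m}. fps_const (y j / fact (j - 1)) * fps_X ^ (j - 1))"

lemma bell_factor_agree_trunc:
  assumes "j \<ge> 1"
  shows "fps_agree (Suc N) (bell_factor y j) (bell_factor_trunc y j N)"
  unfolding fps_agree_def
proof (intro allI impI)
  fix s assume s: "s < Suc N"
  let ?c = "y j / fact j"
  have eq: "(s = j * i) \<longleftrightarrow> (j dvd s \<and> i = s div j)" for i
    using assms by auto
  have "bell_factor_trunc y j N $ s = (\<Sum>i\<le>N. (if j dvd s \<and> i = s div j then ?c ^ i / fact i else 0))"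
    unfolding bell_factor_trunc_def fps_sum_nth fps_mult_left_const_nth fps_X_power_nth
    by (intro sum.cong refl) (auto simp: eq)
  also have "\<dots> = (if j dvd s then ?c ^ (s div j) / fact (s div j) else 0)"
  proof (cases "j dvd s")
    case True
    have "s div j \<le> N" using s assms by (meson div_le_dividend le_trans less_Suc_eq_le)
    then show ?thesis using True by (simp add: sum.delta')
  qed simp
  finally show "bell_factor y j $ s = bell_factor_trunc y j N $ s" by (simp add: bell_factor_def)
qed

lemma bell_factor_trunc_prod_nth:
  "(\<Prod>j\<in>{1..m}. bell_factor_trunc y j N) $ s =
     (\<Sum>k\<in>{k\<in>PiE {1..m} (\<lambda>_. {..N}). (\<Sum>j=1..m. j * k j) = s}.
        \<Prod>j\<in>{1..m}. (y j / fact j) ^ k j / fact (k j))"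
proof -
  let ?c = "\<lambda>k j. (y j / fact j) ^ k j / fact (k j)"
  have "(\<Prod>j\<in>{1..m}. bell_factor_trunc y j N) =
        (\<Sum>k\<in>PiE {1..m} (\<lambda>_. {..N}). \<Prod>j\<in>{1..m}. fps_const (?c k j) * fps_X ^ (j * k j))"
    unfolding bell_factor_trunc_def by (rule prod_sum_PiE) auto
  also have "\<dots> = (\<Sum>k\<in>PiE {1..m} (\<lambda>_. {..N}).
          fps_const (\<Prod>j\<in>{1..m}. ?c k j) * fps_X ^ (\<Sum>j=1..m. j * k j))"
    by (intro sum.cong refl) (simp only: prod.distrib fps_const_prod power_sum)
  finally have prod_eq: "(\<Prod>j\<in>{1..m}. bell_factor_trunc y j N) = (\<Sum>k\<in>PiE {1..m} (\<lambda>_. {..N}).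
          fps_const (\<Prod>j\<in>{1..m}. ?c k j) * fps_X ^ (\<Sum>j=1..m. j * k j))" .
  have "(\<Prod>j\<in>{1..m}. bell_factor_trunc y j N) $ s = (\<Sum>k\<in>PiE {1..m} (\<lambda>_. {..N}).
          (if (\<Sum>j=1..m. j * k j) = s then (\<Prod>j\<in>{1..m}. ?c k j) else 0))"
    unfolding prod_eq fps_sum_nth fps_mult_left_const_nth fps_X_power_nth by (intro sum.cong refl) auto
  also have "\<dots> = (\<Sum>k\<in>{k\<in>PiE {1..m} (\<lambda>_. {..N}). (\<Sum>j=1..m. j * k j) = s}. \<Prod>j\<in>{1..m}. ?c k j)"
    by (rule sum.inter_filter[symmetric]) (simp add: finite_PiE)
  finally show ?thesis .
qed

lemma bell_egf_nth:
  assumes "s \<le> N"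
  shows "bell_egf y m $ s = (\<Sum>k\<in>{k\<in>PiE {1..m} (\<lambda>_. {..N}). (\<Sum>j=1..m. j * k j) = s}.
           \<Prod>j\<in>{1..m}. (y j / fact j) ^ k j / fact (k j))"
proof -
  have "fps_agree (Suc N) (bell_egf y m) (\<Prod>j\<in>{1..m}. bell_factor_trunc y j N)"
    unfolding bell_egf_def by (intro fps_agree_prod bell_factor_agree_trunc) auto
  then show ?thesis
    using assms unfolding fps_agree_def bell_factor_trunc_prod_nth[symmetric] by auto
qed

lemma bell_Y_egf: "bell_Y r y = fact r * bell_egf y r $ r"
  unfolding bell_Y_def bell_egf_nth[OF order.refl] sum_distrib_left
  by (intro sum.cong refl) (simp add: prod.distrib prod_dividef power_divide)

lemma bell_egf_nth_stable:
  assumes "s \<le> m"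
  shows "bell_egf y m $ s = bell_egf y s $ s"
proof -
  have "{1..m} = {1..s} \<union> {s<..m}" using assms by auto
  then have eq: "bell_egf y m = bell_egf y s * (\<Prod>j\<in>{s<..m}. bell_factor y j)"
    unfolding bell_egf_def by (simp add: prod.union_disjoint ivl_disj_int)
  have "fps_agree (Suc s) (bell_factor y j) 1" if "s < j" for j
    unfolding fps_agree_def
  proof (intro allI impI)
    fix t assume "t < Suc s"
    then have "t < j" using that by simp
    then have "j dvd t \<longleftrightarrow> t = 0" using dvd_imp_le by fastforce
    then show "bell_factor y j $ t = 1 $ t" by (auto simp: bell_factor_def)
  qed
  then have "fps_agree (Suc s) (\<Prod>j\<in>{s<..m}. bell_factor y j) (\<Prod>j\<in>{s<..m}. 1)"
    by (intro fps_agree_prod) auto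
  then have "fps_agree (Suc s) (bell_egf y s * (\<Prod>j\<in>{s<..m}. bell_factor y j)) (bell_egf y s * 1)"
    by (intro fps_agree_mult fps_agree_refl) simp
  then show ?thesis unfolding eq fps_agree_def by simp
qed

lemma bell_factor_deriv:
  assumes "j \<ge> 1"
  shows "fps_deriv (bell_factor y j) =
           fps_const (y j / fact (j - 1)) * (fps_X ^ (j - 1) * bell_factor y j)"
proof (rule fps_ext)
  fix s
  let ?c = "y j / fact j"
  obtain j' where j: "j = Suc j'" using assms by (cases j) auto
  have nth: "bell_factor y j $ (j * q) = ?c ^ q / fact q" for q
    using assms by (simp add: bell_factor_def)
  show "fps_deriv (bell_factor y j) $ s =
          (fps_const (y j / fact (j - 1)) * (fps_X ^ (j - 1) * bell_factor y j)) $ s"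
  proof (cases "j dvd Suc s")
    case True
    then obtain q where q: "Suc s = j * q" by blast
    then obtain q' where q': "q = Suc q'" by (cases q) auto
    have "fps_deriv (bell_factor y j) $ s = of_nat (Suc s) * (?c ^ q / fact q)"
      unfolding fps_deriv_nth using nth[of q] q by (simp del: of_nat_Suc)
    also have "\<dots> = y j / fact j' * (?c ^ q' / fact q')"
    proof -
      have "of_nat (Suc s) = (of_nat j * of_nat q :: real)" using q by (metis of_nat_mult)
      then show ?thesis unfolding q' j by (simp add: field_simps fact_Suc del: of_nat_Suc)
    qed
    also have "\<dots> = (fps_const (y j / fact (j - 1)) * (fps_X ^ (j - 1) * bell_factor y j)) $ s"
    proof -
      have "\<not> s < j'" "s - j' = j * q'" using q q' j by auto
      then show ?thesis using nth[of q'] j by (simp add: fps_X_power_mult_nth)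
    qed
    finally show ?thesis .
  next
    case False
    have "(fps_X ^ (j - 1) * bell_factor y j) $ s = 0"
    proof (cases "s < j'")
      case False
      have "Suc s = (s - j') + j" using False j by simp
      then have "\<not> j dvd (s - j')" using \<open>\<not> j dvd Suc s\<close> by (metis dvd_add_triv_right_iff)
      then show ?thesis using False j by (simp add: fps_X_power_mult_nth bell_factor_def)
    qed (simp add: fps_X_power_mult_nth j)
    then show ?thesis using False by (simp add: bell_factor_def)
  qed
qed

lemma bell_egf_deriv: "fps_deriv (bell_egf y m) = bell_log_deriv y m * bell_egf y m"
proof (induction m)
  case 0
  show ?case by (simp add: bell_egf_def bell_log_deriv_def)
next
  case (Suc m)
  let ?c = "fps_const (y (Suc m) / fact m)" and ?E = "bell_factor y (Suc m)"
  have egf: "bell_egf y (Suc m) = ?E * bell_egf y m"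
    by (simp add: bell_egf_def prod.nat_ivl_Suc')
  have ld: "bell_log_deriv y (Suc m) = ?c * fps_X ^ m + bell_log_deriv y m"
    by (simp add: bell_log_deriv_def sum.nat_ivl_Suc')
  have "fps_deriv (bell_egf y (Suc m)) = ?c * (fps_X ^ m * ?E) * bell_egf y m
          + ?E * (bell_log_deriv y m * bell_egf y m)"
    unfolding egf fps_deriv_mult Suc using bell_factor_deriv[of "Suc m" y] by simp
  also have "\<dots> = (?c * fps_X ^ m + bell_log_deriv y m) * (?E * bell_egf y m)"
    by (simp add: algebra_simps)
  finally show ?case unfolding egf ld .
qed

lemma bell_log_deriv_nth: "bell_log_deriv y m $ t = (if t < m then y (Suc t) / fact t else 0)"
proof -
  have "bell_log_deriv y m $ t = (\<Sum>j\<in>{1..m}. (if j = Suc t then y j / fact (j - 1) else 0))"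
    unfolding bell_log_deriv_def fps_sum_nth
    by (intro sum.cong refl) (auto split: nat.split simp: Suc_le_eq)
  also have "\<dots> = (if t < m then y (Suc t) / fact t else 0)"
    by (subst sum.delta) auto
  finally show ?thesis .
qed

lemma bell_Y_Suc:
  "bell_Y (Suc r) y = (\<Sum>i\<le>r. of_nat (r choose i) * y (Suc i) * bell_Y (r - i) y)"
proof -
  have coeff: "bell_egf y (Suc r) $ u = bell_Y u y / fact u" if "u \<le> Suc r" for u
    using bell_egf_nth_stable[OF that] by (simp add: bell_Y_egf[of u y])
  have "of_nat (Suc r) * bell_egf y (Suc r) $ Suc r = fps_deriv (bell_egf y (Suc r)) $ r"
    by simp
  also have "\<dots> = (\<Sum>i=0..r. bell_log_deriv y (Suc r) $ i * bell_egf y (Suc r) $ (r - i))"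
    by (simp add: bell_egf_deriv fps_mult_nth)
  also have "\<dots> = (\<Sum>i\<le>r. y (Suc i) / fact i * (bell_Y (r - i) y / fact (r - i)))"
    by (intro sum.cong) (auto simp: bell_log_deriv_nth coeff)
  finally have "bell_Y (Suc r) y / fact r =
                  (\<Sum>i\<le>r. y (Suc i) / fact i * (bell_Y (r - i) y / fact (r - i)))"
    by (simp add: coeff fact_Suc field_simps del: of_nat_Suc)
  then have "bell_Y (Suc r) y = fact r * (\<Sum>i\<le>r. y (Suc i) / fact i * (bell_Y (r - i) y / fact (r - i)))"
    by (simp add: field_simps)
  also have "\<dots> = (\<Sum>i\<le>r. of_nat (r choose i) * y (Suc i) * bell_Y (r - i) y)"
    unfolding sum_distrib_left by (intro sum.cong refl) (simp add: binomial_fact field_simps)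
  finally show ?thesis .
qed

lemma bell_Y_0: "bell_Y 0 y = 1"
  unfolding bell_Y_def by simp

lemma bell_Y_1: "bell_Y (Suc 0) y = y 1"
  using bell_Y_Suc[of 0 y] by (simp add: bell_Y_0)

text \<open>A bound for \<open>Y\<^sub>r\<close> with dominated arguments: each monomial has degree at most \<open>r\<close>.\<close>
lemma bell_Y_abs_bound:
  assumes M: "M \<ge> 1" and y: "\<And>j. j \<in> {1..r} \<Longrightarrow> \<bar>y j\<bar> \<le> M * \<beta> j"
    and \<beta>: "\<And>j. \<beta> j \<ge> 0"
  shows "\<bar>bell_Y r y\<bar> \<le> M ^ r * bell_Y r \<beta>"
proof -
  let ?K = "{k \<in> PiE {1..r} (\<lambda>_. {..r}). (\<Sum>j=1..r. j * k j) = r}"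
  let ?c = "\<lambda>k. fact r / (\<Prod>j=1..r. fact (k j)) :: real"
  have "\<bar>bell_Y r y\<bar> \<le> (\<Sum>k\<in>?K. ?c k * \<bar>\<Prod>j=1..r. (y j / fact j) ^ k j\<bar>)"
    unfolding bell_Y_def by (rule order.trans[OF sum_abs]) (simp add: abs_mult abs_prod)
  also have "\<dots> \<le> (\<Sum>k\<in>?K. ?c k * (M ^ r * (\<Prod>j=1..r. (\<beta> j / fact j) ^ k j)))"
  proof (intro sum_mono mult_left_mono)
    fix k assume k: "k \<in> ?K"
    have "(\<Sum>j=1..r. k j) \<le> (\<Sum>j=1..r. j * k j)" by (intro sum_mono) auto
    then have deg: "(\<Sum>j=1..r. k j) \<le> r" using k by simp
    have "\<bar>\<Prod>j=1..r. (y j / fact j) ^ k j\<bar> = (\<Prod>j=1..r. (\<bar>y j\<bar> / fact j) ^ k j)"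
      by (simp add: abs_prod power_abs)
    also have "\<dots> \<le> (\<Prod>j=1..r. M ^ k j * (\<beta> j / fact j) ^ k j)"
    proof (intro prod_mono conjI)
      fix j assume j: "j \<in> {1..r}"
      have "\<bar>y j\<bar> / fact j \<le> M * (\<beta> j / fact j)" using y[OF j] by (simp add: divide_right_mono)
      then show "(\<bar>y j\<bar> / fact j) ^ k j \<le> M ^ k j * (\<beta> j / fact j) ^ k j"
        by (metis power_mono abs_ge_zero divide_nonneg_nonneg fact_ge_zero power_mult_distrib)
    qed simp
    also have "\<dots> = M ^ (\<Sum>j=1..r. k j) * (\<Prod>j=1..r. (\<beta> j / fact j) ^ k j)"
      by (simp only: prod.distrib power_sum)
    also have "\<dots> \<le> M ^ r * (\<Prod>j=1..r. (\<beta> j / fact j) ^ k j)"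
      by (intro mult_right_mono power_increasing deg M prod_nonneg) (simp add: \<beta>)
    finally show "\<bar>\<Prod>j=1..r. (y j / fact j) ^ k j\<bar> \<le> M ^ r * (\<Prod>j=1..r. (\<beta> j / fact j) ^ k j)" .
  qed (auto intro!: divide_nonneg_nonneg prod_nonneg)
  also have "\<dots> = M ^ r * bell_Y r \<beta>"
    unfolding bell_Y_def sum_distrib_left by (simp add: mult_ac)
  finally show ?thesis .
qed


section \<open>The derivative of the series terms\<close>

text \<open>The Leibniz-type identity that turns the derivative of the Bell recurrence back into
  an instance of the recurrence.\<close>
lemma binomial_sum_shift:
  fixes u v :: "nat \<Rightarrow> real"
  shows "(\<Sum>i\<le>k. of_nat (k choose i) * (u (Suc i) * v (k - i) + u i * v (Suc (k - i)))) =
         (\<Sum>i\<le>Suc k. of_nat (Suc k choose i) * u i * v (Suc k - i))"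
proof -
  have shifted: "(\<Sum>i\<le>k. of_nat (k choose i) * u i * v (Suc (k - i))) =
           u 0 * v (Suc k) + (\<Sum>i\<le>k. of_nat (k choose Suc i) * u (Suc i) * v (k - i))"
  proof -
    have "(\<Sum>i\<le>k. of_nat (k choose i) * u i * v (Suc (k - i))) =
          (\<Sum>i\<le>Suc k. of_nat (k choose i) * u i * v (Suc k - i))"
      by (simp add: Suc_diff_le)
    also have "\<dots> = u 0 * v (Suc k) + (\<Sum>i\<le>k. of_nat (k choose Suc i) * u (Suc i) * v (k - i))"
      by (subst sum.atMost_Suc_shift) simp
    finally show ?thesis .
  qed
  have "(\<Sum>i\<le>Suc k. of_nat (Suc k choose i) * u i * v (Suc k - i)) =
        u 0 * v (Suc k) + (\<Sum>i\<le>k. of_nat (Suc k choose Suc i) * u (Suc i) * v (k - i))"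
    by (subst sum.atMost_Suc_shift) simp
  also have "\<dots> = (\<Sum>i\<le>k. of_nat (k choose i) * u (Suc i) * v (k - i)) +
                  (\<Sum>i\<le>k. of_nat (k choose i) * u i * v (Suc (k - i)))"
    unfolding shifted by (simp add: sum.distrib algebra_simps)
  also have "\<dots> = (\<Sum>i\<le>k. of_nat (k choose i) * (u (Suc i) * v (k - i) + u i * v (Suc (k - i))))"
    by (simp add: sum.distrib algebra_simps)
  finally show ?thesis ..
qed

lemma bell_Y_times_deriv:
  fixes P :: "real \<Rightarrow> real" and y :: "real \<Rightarrow> nat \<Rightarrow> real"
  assumes P: "(P has_field_derivative P t * y t 1) (at t)"
    and y: "\<And>j. j \<ge> 1 \<Longrightarrow> ((\<lambda>s. y s j) has_field_derivative y t (Suc j)) (at t)"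
  shows "((\<lambda>s. P s * bell_Y r (y s)) has_field_derivative P t * bell_Y (Suc r) (y t)) (at t)"
proof (induction r rule: less_induct)
  case (less r)
  define T where "T i s = P s * bell_Y i (y s)" for i s
  have rec: "T (Suc i) s = (\<Sum>l\<le>i. of_nat (i choose l) * y s (Suc l) * T (i - l) s)" for i s
    unfolding T_def bell_Y_Suc sum_distrib_left by (intro sum.cong refl) (simp add: algebra_simps)
  show ?case
  proof (cases r)
    case 0
    then show ?thesis using P by (simp add: bell_Y_0 bell_Y_1)
  next
    case (Suc k)
    have "((\<lambda>s. \<Sum>l\<le>k. of_nat (k choose l) * y s (Suc l) * T (k - l) s) has_field_derivative
          (\<Sum>l\<le>k. of_nat (k choose l) *
             (y t (Suc (Suc l)) * T (k - l) t + y t (Suc l) * T (Suc (k - l)) t))) (at t)"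
    proof (intro DERIV_sum)
      fix l assume "l \<in> {..k}"
      have "((\<lambda>s. T (k - l) s) has_field_derivative T (Suc (k - l)) t) (at t)"
        using less.IH[of "k - l"] Suc by (simp add: T_def)
      moreover have "((\<lambda>s. y s (Suc l)) has_field_derivative y t (Suc (Suc l))) (at t)"
        by (rule y) simp
      ultimately have "((\<lambda>s. of_nat (k choose l) * (y s (Suc l) * T (k - l) s)) has_field_derivative
          of_nat (k choose l) * (y t (Suc (Suc l)) * T (k - l) t + T (Suc (k - l)) t * y t (Suc l))) (at t)"
        by (intro DERIV_cmult DERIV_mult)
      then show "((\<lambda>s. of_nat (k choose l) * y s (Suc l) * T (k - l) s) has_field_derivative
              of_nat (k choose l) * (y t (Suc (Suc l)) * T (k - l) t + y t (Suc l) * T (Suc (k - l)) t)) (at t)"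
        by (simp add: mult_ac)
    qed
    also have "(\<Sum>l\<le>k. of_nat (k choose l) *
             (y t (Suc (Suc l)) * T (k - l) t + y t (Suc l) * T (Suc (k - l)) t)) = T (Suc r) t"
      using binomial_sum_shift[of k "\<lambda>l. y t (Suc l)" "\<lambda>i. T i t"] by (simp add: Suc rec)
    finally have "((\<lambda>s. T (Suc k) s) has_field_derivative T (Suc r) t) (at t)"
      by (simp only: rec)
    then show ?thesis by (simp only: Suc T_def)
  qed
qed

definition harm_arg :: "nat \<Rightarrow> real \<Rightarrow> nat \<Rightarrow> real" where
  "harm_arg n a j = (-1) ^ j * fact (j - 1) * gen_harm n j a"

definition series_term :: "real \<Rightarrow> nat \<Rightarrow> nat \<Rightarrow> real \<Rightarrow> real" where
  "series_term x r n a =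
     - (1 / real n) * (pochhammer x n / pochhammer a n) * bell_Y r (harm_arg n a)"

lemma gen_harm_deriv:
  assumes "a > 0"
  shows "((\<lambda>a. gen_harm n j a) has_field_derivative - real j * gen_harm n (Suc j) a) (at a)"
proof -
  have "((\<lambda>a. 1 / (real k + a) ^ j) has_field_derivative - real j * (1 / (real k + a) ^ Suc j)) (at a)"
    for k
  proof -
    have "real k + a \<noteq> 0" using assms by simp
    then have "((\<lambda>a. inverse (real k + a) ^ j) has_field_derivative
          of_nat j * (- (1 * inverse ((real k + a) ^ Suc (Suc 0)))  * inverse (real k + a) ^ (j - Suc 0))) (at a)"
      by (intro DERIV_power DERIV_inverse_fun) (auto intro!: derivative_eq_intros)
    also have "of_nat j * (- (1 * inverse ((real k + a) ^ Suc (Suc 0))) * inverse (real k + a) ^ (j - Suc 0))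
       = - real j * (1 / (real k + a) ^ Suc j)"
    proof -
      have "of_nat j * (- (1 * inverse (u ^ Suc (Suc 0))) * inverse u ^ (j - Suc 0))
              = - real j * (1 / u ^ Suc j)" if "u \<noteq> 0" for u :: real
        using that by (cases j) (simp_all add: power_inverse divide_inverse mult_ac ring_distribs)
      then show ?thesis using \<open>real k + a \<noteq> 0\<close> .
    qed
    finally show ?thesis by (simp only: power_inverse inverse_eq_divide power_one_over)
  qed
  then show ?thesis
    unfolding gen_harm_def sum_distrib_left by (intro DERIV_sum)
qed

lemma harm_arg_deriv:
  assumes "a > 0" "j \<ge> 1"
  shows "((\<lambda>a. harm_arg n a j) has_field_derivative harm_arg n a (Suc j)) (at a)"
proof -
  have "((\<lambda>a. harm_arg n a j) has_field_derivative
          ((-1) ^ j * fact (j - 1)) * (- real j * gen_harm n (Suc j) a)) (at a)"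
    unfolding harm_arg_def by (intro DERIV_cmult gen_harm_deriv assms)
  moreover obtain j' where "j = Suc j'" using assms by (cases j) auto
  ultimately show ?thesis by (simp add: harm_arg_def algebra_simps)
qed

lemma pochhammer_pos: "a > 0 \<Longrightarrow> pochhammer a n > (0::real)"
  by (simp add: pochhammer_prod prod_pos)

lemma pochhammer_deriv:
  assumes "a > 0"
  shows "((\<lambda>a. pochhammer a n) has_field_derivative pochhammer a n * gen_harm n 1 a) (at a)"
proof -
  have "((\<lambda>u. \<Prod>i\<in>{0..<n}. u + of_nat i) has_field_derivative
          (\<Prod>i\<in>{0..<n}. a + of_nat i) * (\<Sum>i\<in>{0..<n}. 1 / (a + of_nat i))) (at a)"
    using assms
    by (intro has_field_derivative_prod'[of "{0..<n}" "\<lambda>i u. u + of_nat i" a "\<lambda>i. 1", simplified])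
       (auto intro!: derivative_eq_intros)
  then show ?thesis
    by (simp add: pochhammer_prod gen_harm_def atLeast0LessThan add.commute)
qed

lemma series_term_deriv:
  assumes "a > 0"
  shows "((\<lambda>a. series_term x r n a) has_field_derivative series_term x (Suc r) n a) (at a)"
proof -
  define C where "C = - (1 / real n) * pochhammer x n"
  have term_eq: "series_term x i n = (\<lambda>a. C * inverse (pochhammer a n) * bell_Y i (harm_arg n a))" for i
    by (simp add: fun_eq_iff series_term_def C_def divide_inverse)
  have p: "pochhammer a n \<noteq> 0" using pochhammer_pos[OF assms, of n] by linarith
  have "((\<lambda>a. C * inverse (pochhammer a n)) has_field_derivative
          C * (- (pochhammer a n * gen_harm n 1 a * inverse (pochhammer a n ^ Suc (Suc 0))))) (at a)"
    by (intro DERIV_cmult DERIV_inverse_fun pochhammer_deriv assms p)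
  also have "C * (- (pochhammer a n * gen_harm n 1 a * inverse (pochhammer a n ^ Suc (Suc 0)))) =
             C * inverse (pochhammer a n) * harm_arg n a 1"
  proof -
    have "C * (- (q * h * inverse (q ^ Suc (Suc 0)))) = C * inverse q * (- h)" if "q \<noteq> 0" for q h :: real
      using that by (simp add: field_simps)
    then show ?thesis using p by (simp add: harm_arg_def)
  qed
  finally have "((\<lambda>a. C * inverse (pochhammer a n) * bell_Y r (harm_arg n a)) has_field_derivative
                   C * inverse (pochhammer a n) * bell_Y (Suc r) (harm_arg n a)) (at a)"
    by (rule bell_Y_times_deriv) (rule harm_arg_deriv[OF assms])
  then show ?thesis unfolding term_eq .
qed


section \<open>A summable majorant, uniform in \<open>a \<ge> c\<close>\<close>

lemma pochhammer_nonneg: "a \<ge> 0 \<Longrightarrow> pochhammer a n \<ge> (0::real)"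
  by (simp add: pochhammer_prod prod_nonneg)

lemma pochhammer_mono: "0 < c \<Longrightarrow> c \<le> a \<Longrightarrow> pochhammer c n \<le> pochhammer (a::real) n"
  unfolding pochhammer_prod by (intro prod_mono) auto

lemma one_minus_le_powr:
  fixes t \<delta> :: real
  assumes t: "t > 0" and \<delta>: "\<delta> > 0"
  shows "1 - \<delta> / t \<le> (t / (t + 1)) powr \<delta>"
proof -
  have "t / (t + 1) = inverse (1 + 1 / t)" using t by (simp add: field_simps)
  then have ln_eq: "ln (t / (t + 1)) = - ln (1 + 1 / t)" by (simp add: ln_inverse)
  have "\<delta> * ln (1 + 1 / t) \<le> \<delta> * (1 / t)"
    using \<delta> t by (intro mult_left_mono ln_add_one_self_le_self) auto
  then have exponent: "- \<delta> / t \<le> \<delta> * ln (t / (t + 1))" using ln_eq by simp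
  have "1 - \<delta> / t \<le> exp (- \<delta> / t)" using exp_ge_add_one_self[of "- \<delta> / t"] by simp
  also have "\<dots> \<le> exp (\<delta> * ln (t / (t + 1)))" using exponent by simp
  also have "\<dots> = (t / (t + 1)) powr \<delta>" using t by (simp add: powr_def)
  finally show ?thesis .
qed

lemma pochhammer_ratio_le:
  fixes b \<delta> :: real
  assumes b: "b > 0" and \<delta>: "\<delta> > 0" and b\<delta>: "b - \<delta> \<ge> 0"
  shows "pochhammer (b - \<delta>) m / pochhammer b m \<le> (b / (b + m)) powr \<delta>"
proof (induction m)
  case 0
  then show ?case using b by simp
next
  case (Suc m)
  have pb: "pochhammer b m > 0" using b by (rule pochhammer_pos)
  have t: "b + m > 0" using b by simp
  have "pochhammer (b - \<delta>) (Suc m) / pochhammer b (Suc m) =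
        (pochhammer (b - \<delta>) m / pochhammer b m) * (1 - \<delta> / (b + m))"
    using pb t by (simp add: pochhammer_rec' field_simps)
  also have "\<dots> \<le> (b / (b + m)) powr \<delta> * ((b + m) / ((b + m) + 1)) powr \<delta>"
  proof (intro mult_mono Suc.IH one_minus_le_powr t \<delta>)
    show "0 \<le> 1 - \<delta> / (b + m)" using t b\<delta> by (simp add: field_simps)
  qed (use b\<delta> pb pochhammer_nonneg in simp_all)
  also have "\<dots> = (b / (b + Suc m)) powr \<delta>"
  proof -
    have "v / u * (u / w) = v / w" if "u \<noteq> 0" for u v w :: real using that by simp
    from this[of "b + m" b "(b + m) + 1"] t
    have "(b / (b + m)) * ((b + m) / ((b + m) + 1)) = b / (b + Suc m)" by (simp add: add_ac)
    then show ?thesis by (simp add: powr_mult[symmetric])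
  qed
  finally show ?case .
qed

lemma pochhammer_ratio_bound:
  fixes x c :: real
  assumes c: "c > 0" and xc: "x < c"
  obtains A K where "\<And>n. n \<ge> K \<Longrightarrow> \<bar>pochhammer x n\<bar> / pochhammer c n \<le> A * (c + n) powr (x - c)"
proof
  define K where "K = nat \<lceil>\<bar>x\<bar>\<rceil>"
  define \<delta> where "\<delta> = c - x"
  define A where "A = \<bar>pochhammer x K\<bar> / pochhammer c K * (c + K) powr \<delta>"
  have xK: "x + K \<ge> 0" unfolding K_def by linarith
  have \<delta>: "\<delta> > 0" using xc by (simp add: \<delta>_def)
  have cK: "c + K > 0" using c by simp
  fix n assume n: "K \<le> n"
  have tail: "pochhammer (x + K) (n - K) / pochhammer (c + K) (n - K) \<le> ((c + K) / (c + n)) powr \<delta>"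
  proof -
    have x_eq: "x + K = (c + K) - \<delta>" by (simp add: \<delta>_def)
    have n_eq: "(c + K) + real (n - K) = c + n" using n by (simp add: of_nat_diff)
    have "pochhammer ((c + K) - \<delta>) (n - K) / pochhammer (c + K) (n - K) \<le>
            ((c + K) / ((c + K) + real (n - K))) powr \<delta>"
      by (rule pochhammer_ratio_le[OF cK \<delta>]) (use xK x_eq in simp)
    then show ?thesis by (simp only: x_eq[symmetric] n_eq)
  qed
  have pK: "pochhammer c K > 0" using c by (rule pochhammer_pos)
  have "\<bar>pochhammer x n\<bar> / pochhammer c n =
        \<bar>pochhammer x K\<bar> / pochhammer c K *
          (pochhammer (x + K) (n - K) / pochhammer (c + K) (n - K))"
    unfolding pochhammer_product[OF n, of x] pochhammer_product[OF n, of c]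
    using pochhammer_nonneg[OF xK] by (simp add: abs_mult)
  also have "\<dots> \<le> \<bar>pochhammer x K\<bar> / pochhammer c K * ((c + K) / (c + n)) powr \<delta>"
    by (intro mult_left_mono tail) (use pK in simp)
  also have "\<dots> = A * (c + n) powr (x - c)"
  proof -
    have x_c: "x - c = - \<delta>" by (simp add: \<delta>_def)
    show ?thesis
      unfolding x_c powr_minus powr_divide A_def by (simp add: divide_inverse mult.assoc)
  qed
  finally show "\<bar>pochhammer x n\<bar> / pochhammer c n \<le> A * (c + n) powr (x - c)" .
qed

lemma gen_harm_1_le_ln:
  assumes c: "c > 0"
  shows "gen_harm (Suc n) 1 c \<le> 1 / c + ln ((c + n) / c)"
proof (induction n)
  case 0
  then show ?case by (simp add: gen_harm_def)
next
  case (Suc n)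
  have t: "c + n > 0" using c by simp
  have step: "1 / ((c + n) + 1) \<le> ln (((c + n) + 1) / (c + n))"
  proof -
    have "ln ((c + n) / ((c + n) + 1)) \<le> (c + n) / ((c + n) + 1) - 1"
      by (rule ln_le_minus_one) (use t in simp)
    then show ?thesis using t by (simp add: ln_div field_simps)
  qed
  have "gen_harm (Suc (Suc n)) 1 c = gen_harm (Suc n) 1 c + 1 / ((c + n) + 1)"
    by (simp add: gen_harm_def add_ac)
  also have "\<dots> \<le> 1 / c + (ln ((c + n) / c) + ln (((c + n) + 1) / (c + n)))"
    using Suc.IH step by linarith
  also have "ln ((c + n) / c) + ln (((c + n) + 1) / (c + n)) = ln ((c + Suc n) / c)"
    using t c by (simp add: ln_div add_ac)
  finally show ?case by simp
qed

lemma ln_le_powr_div: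
  fixes y \<eta> :: real
  assumes y: "y > 0" and \<eta>: "\<eta> > 0"
  shows "ln y \<le> y powr \<eta> / \<eta>"
proof -
  have "ln (y powr \<eta>) \<le> y powr \<eta> - 1" by (rule ln_le_minus_one) (use y in simp)
  then have "\<eta> * ln y \<le> y powr \<eta>" using y by simp
  then show ?thesis using \<eta> by (simp add: field_simps)
qed

lemma gen_harm_1_le_powr:
  assumes c: "c > 0" and \<eta>: "\<eta> > 0"
  shows "max 1 (gen_harm (Suc m) 1 c) \<le>
           (1 + 1 / c + 1 / (c powr \<eta> * \<eta>)) * (c + real (Suc m)) powr \<eta>"
proof -
  define T where "T = (c + real (Suc m)) powr \<eta>"
  define D where "D = 1 / (c powr \<eta> * \<eta>)"
  have T: "T \<ge> 1" unfolding T_def using c \<eta> by (intro ge_one_powr_ge_zero) auto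
  have D: "D \<ge> 0" unfolding D_def using c \<eta> by simp
  have "gen_harm (Suc m) 1 c \<le> 1 / c + ln ((c + m) / c)" by (rule gen_harm_1_le_ln[OF c])
  also have "ln ((c + m) / c) \<le> ln ((c + real (Suc m)) / c)"
    using c by (subst ln_le_cancel_iff) (auto intro: divide_right_mono)
  also have "ln ((c + real (Suc m)) / c) \<le> ((c + real (Suc m)) / c) powr \<eta> / \<eta>"
    by (rule ln_le_powr_div) (use c \<eta> in auto)
  also have "((c + real (Suc m)) / c) powr \<eta> / \<eta> = T * D"
    by (simp add: T_def D_def powr_divide)
  finally have H: "gen_harm (Suc m) 1 c \<le> 1 / c + T * D" by simp
  have "1 / c * 1 \<le> 1 / c * T" using T c by (intro mult_left_mono) auto
  moreover have "0 \<le> T * D" "0 \<le> 1 / c * T" using T D c by simp_all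
  moreover have "(1 + 1 / c + D) * T = T + 1 / c * T + T * D" by (simp add: algebra_simps)
  ultimately show ?thesis using H T unfolding T_def[symmetric] D_def[symmetric] by linarith
qed

lemma gen_harm_nonneg: "c > 0 \<Longrightarrow> gen_harm n j c \<ge> 0"
  unfolding gen_harm_def by (intro sum_nonneg) simp

lemma gen_harm_le:
  assumes c: "c > 0" and ca: "c \<le> a" and j: "j \<ge> 1"
  shows "gen_harm n j a \<le> gen_harm n 1 c / c ^ (j - 1)"
  unfolding gen_harm_def sum_divide_distrib
proof (intro sum_mono)
  fix k assume "k \<in> {..<n}"
  obtain j' where j': "j = Suc j'" using j by (cases j) auto
  have "(real k + c) * c ^ j' \<le> (real k + c) * (real k + c) ^ j'"
    by (intro mult_left_mono power_mono) (use c in auto)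
  also have "\<dots> \<le> (real k + a) ^ j"
    unfolding j' power_Suc[symmetric] by (intro power_mono) (use c ca in auto)
  finally have le: "(real k + c) * c ^ j' \<le> (real k + a) ^ j" .
  have "1 / (real k + a) ^ j \<le> 1 / ((real k + c) * c ^ j')"
    by (intro divide_left_mono[OF le] mult_pos_pos) (use c ca in auto)
  then show "1 / (real k + a) ^ j \<le> 1 / (real k + c) ^ 1 / c ^ (j - 1)"
    by (simp add: j')
qed

text \<open>The majorant of the \<open>n\<close>-th term of the \<open>r\<close>-th series, valid for all \<open>a \<ge> c\<close>
  up to the constant factor \<open>Y\<^sub>r(\<beta>)\<close> with \<open>\<beta>\<^sub>j = (j-1)!/c\<^bsup>j-1\<^esup>\<close>.\<close>
definition majorant :: "real \<Rightarrow> real \<Rightarrow> nat \<Rightarrow> nat \<Rightarrow> real" where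
  "majorant x c r n =
     1 / real n * (\<bar>pochhammer x n\<bar> / pochhammer c n) * max 1 (gen_harm n 1 c) ^ r"

lemma majorant_nonneg: "c > 0 \<Longrightarrow> majorant x c r n \<ge> 0"
  by (simp add: majorant_def pochhammer_pos less_imp_le)

definition harm_arg_bound :: "real \<Rightarrow> nat \<Rightarrow> real" where
  "harm_arg_bound c j = fact (j - 1) / c ^ (j - 1)"

lemma series_term_bound:
  assumes c: "c > 0" and ca: "c \<le> a"
  shows "\<bar>series_term x r n a\<bar> \<le> majorant x c r n * bell_Y r (harm_arg_bound c)"
proof -
  let ?M = "max 1 (gen_harm n 1 c)"
  have pc: "pochhammer c n > 0" using c by (rule pochhammer_pos)
  have pa: "pochhammer c n \<le> pochhammer a n" using c ca by (rule pochhammer_mono)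
  have arg: "\<bar>harm_arg n a j\<bar> \<le> ?M * harm_arg_bound c j" if j: "j \<in> {1..r}" for j
  proof -
    have "\<bar>harm_arg n a j\<bar> = fact (j - 1) * gen_harm n j a"
      using gen_harm_nonneg[of a n j] c ca by (simp add: harm_arg_def abs_mult)
    also have "\<dots> \<le> fact (j - 1) * (gen_harm n 1 c / c ^ (j - 1))"
      using j by (intro mult_left_mono gen_harm_le c ca) auto
    also have "\<dots> = gen_harm n 1 c * harm_arg_bound c j" by (simp add: harm_arg_bound_def)
    also have "\<dots> \<le> ?M * harm_arg_bound c j"
      using c by (intro mult_right_mono) (auto simp: harm_arg_bound_def)
    finally show ?thesis .
  qed
  have bell: "\<bar>bell_Y r (harm_arg n a)\<bar> \<le> ?M ^ r * bell_Y r (harm_arg_bound c)"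
    by (rule bell_Y_abs_bound) (use arg c in \<open>auto simp: harm_arg_bound_def\<close>)
  have "\<bar>series_term x r n a\<bar> =
          1 / real n * (\<bar>pochhammer x n\<bar> / pochhammer a n) * \<bar>bell_Y r (harm_arg n a)\<bar>"
    using pc pa by (simp add: series_term_def abs_mult)
  also have "\<dots> \<le> 1 / real n * (\<bar>pochhammer x n\<bar> / pochhammer c n) * (?M ^ r * bell_Y r (harm_arg_bound c))"
    using pc pa by (intro mult_mono mult_left_mono divide_left_mono bell) auto
  finally show ?thesis by (simp add: majorant_def mult_ac)
qed

text \<open>The power bookkeeping behind the decay of the majorant: for \<open>r\<eta> \<le> \<delta>/2\<close> the factor
  \<open>t\<^bsup>-\<delta>\<^esup>\<close> absorbs \<open>(t\<^sup>\<eta>)\<^sup>r\<close> with \<open>t\<^bsup>-\<delta>/2\<^esup>\<close> to spare, and \<open>n \<le> t\<close>.\<close>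
lemma powr_decay_estimate:
  fixes n t A B \<delta> \<eta> :: real
  assumes "0 < n" "n \<le> t" "1 \<le> t" "0 \<le> A" "0 \<le> B" "0 < \<delta>" "real r * \<eta> \<le> \<delta> / 2"
  shows "1 / n * (A * t powr (- \<delta>)) * (B * t powr \<eta>) ^ r \<le> A * B ^ r * n powr (-1 - \<delta> / 2)"
proof -
  have "1 / n * (A * t powr (- \<delta>)) * (B * t powr \<eta>) ^ r =
          A * B ^ r * (1 / n * t powr (real r * \<eta> - \<delta>))"
  proof -
    have "(t powr \<eta>) ^ r = t powr (real r * \<eta>)" using assms by (simp add: powr_power)
    moreover have "t powr (- \<delta>) * t powr (real r * \<eta>) = t powr (real r * \<eta> - \<delta>)"
      by (simp add: powr_add[symmetric])
    ultimately show ?thesis by (simp add: power_mult_distrib algebra_simps)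
  qed
  also have "\<dots> \<le> A * B ^ r * (1 / n * t powr (- \<delta> / 2))"
    using assms by (intro mult_left_mono powr_mono) auto
  also have "\<dots> \<le> A * B ^ r * (1 / n * n powr (- \<delta> / 2))"
    using assms by (intro mult_left_mono powr_mono2') auto
  also have "1 / n * n powr (- \<delta> / 2) = n powr (-1 - \<delta> / 2)"
  proof -
    have "-1 - \<delta> / 2 = (-1) + (- \<delta> / 2)" by simp
    then have "n powr (-1 - \<delta> / 2) = n powr (-1) * n powr (- \<delta> / 2)"
      by (simp only: powr_add)
    also have "n powr (-1) = 1 / n" using assms by (simp add: powr_minus_divide)
    finally show ?thesis by simp
  qed
  finally show ?thesis .
qed

text \<open>The majorant decays like \<open>n\<^bsup>-1-(c-x)/2\<^esup>\<close>: the factor \<open>n\<^sup>-\<^sup>1 (c + n)\<^bsup>x-c\<^esup>\<close>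
  beats the growth \<open>(c + n)\<^bsup>r\<eta>\<^esup>\<close> of the harmonic factor for small \<open>\<eta>\<close>.\<close>
lemma majorant_decay:
  assumes c: "c > 0" and xc: "x < c"
  obtains C K where
    "\<And>m. m \<ge> K \<Longrightarrow> majorant x c r (Suc m) \<le> C * real (Suc m) powr (-1 - (c - x) / 2)"
proof -
  define \<delta> where "\<delta> = c - x"
  define \<eta> where "\<eta> = \<delta> / (2 * (real r + 1))"
  have \<delta>: "\<delta> > 0" using xc by (simp add: \<delta>_def)
  have \<eta>: "\<eta> > 0" using \<delta> by (simp add: \<eta>_def)
  have r\<eta>: "real r * \<eta> \<le> \<delta> / 2"
  proof -
    have "real r * \<eta> = \<delta> / 2 * (real r / (real r + 1))" by (simp add: \<eta>_def field_simps)
    also have "\<dots> \<le> \<delta> / 2 * 1" using \<delta> by (intro mult_left_mono) auto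
    finally show ?thesis by simp
  qed
  obtain A K where AK: "\<And>n. n \<ge> K \<Longrightarrow> \<bar>pochhammer x n\<bar> / pochhammer c n \<le> A * (c + n) powr (x - c)"
    using pochhammer_ratio_bound[OF c xc] by blast
  define B where "B = 1 + 1 / c + 1 / (c powr \<eta> * \<eta>)"
  have B: "B \<ge> 0" unfolding B_def using c \<eta> by simp
  show ?thesis
  proof (rule that[of K "A * B ^ r"])
    fix m assume m: "K \<le> m"
    define t where "t = c + real (Suc m)"
    define n where "n = real (Suc m)"
    have t: "t \<ge> 1" "n \<le> t" using c by (simp_all add: t_def n_def)
    have n: "n > 0" by (simp add: n_def)
    have pc: "pochhammer c (Suc m) > 0" using c by (rule pochhammer_pos)
    have ratio: "\<bar>pochhammer x (Suc m)\<bar> / pochhammer c (Suc m) \<le> A * t powr (- \<delta>)"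
      using AK[of "Suc m"] m by (simp add: t_def \<delta>_def)
    have A: "A \<ge> 0"
    proof -
      have "0 \<le> A * t powr (- \<delta>)" using ratio pc by (smt (verit) divide_nonneg_pos abs_ge_zero)
      then show ?thesis using t by (simp add: zero_le_mult_iff)
    qed
    have harm: "max 1 (gen_harm (Suc m) 1 c) ^ r \<le> (B * t powr \<eta>) ^ r"
      by (intro power_mono) (use gen_harm_1_le_powr[OF c \<eta>, of m] in \<open>auto simp: B_def t_def\<close>)
    have "majorant x c r (Suc m) \<le> 1 / n * (A * t powr (- \<delta>)) * (B * t powr \<eta>) ^ r"
      unfolding majorant_def n_def[symmetric]
      using ratio harm n pc A by (intro mult_mono mult_left_mono) auto
    also have "\<dots> \<le> A * B ^ r * n powr (-1 - \<delta> / 2)"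
      by (rule powr_decay_estimate) (use n t A B \<delta> r\<eta> in auto)
    finally show "majorant x c r (Suc m) \<le> A * B ^ r * real (Suc m) powr (-1 - (c - x) / 2)"
      by (simp add: n_def \<delta>_def)
  qed
qed

text \<open>Comparison with \<open>\<Sum> n\<^bsup>-1-(c-x)/2\<^esup>\<close>.\<close>
lemma majorant_summable:
  assumes c: "c > 0" and xc: "x < c"
  shows "summable (\<lambda>m. majorant x c r (Suc m))"
proof -
  obtain C K where decay:
    "\<And>m. m \<ge> K \<Longrightarrow> majorant x c r (Suc m) \<le> C * real (Suc m) powr (-1 - (c - x) / 2)"
    using majorant_decay[OF c xc] by blast
  have "summable (\<lambda>m. real m powr (-1 - (c - x) / 2))"
    using xc by (simp add: summable_real_powr_iff)
  then have "summable (\<lambda>m. C * real (Suc m) powr (-1 - (c - x) / 2))"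
    by (subst summable_Suc_iff) (rule summable_mult)
  moreover have "\<forall>\<^sub>F m in sequentially. norm (majorant x c r (Suc m)) \<le> C * real (Suc m) powr (-1 - (c - x) / 2)"
    unfolding eventually_sequentially
    using decay by (auto simp: abs_of_nonneg[OF majorant_nonneg[OF c]] intro!: exI[of _ K])
  ultimately show ?thesis by (rule summable_comparison_test_ev[rotated])
qed

text \<open>By the Weierstrass M-test, each series converges uniformly on \<open>{c<..}\<close>.\<close>
lemma series_uniformly_convergent:
  assumes c: "c > 0" and xc: "x < c"
  shows "uniformly_convergent_on {c<..} (\<lambda>N a. \<Sum>i<N. series_term x r (Suc i) a)"
proof -
  have summable: "summable (\<lambda>m. majorant x c r (Suc m) * bell_Y r (harm_arg_bound c))"
    by (intro summable_mult2 majorant_summable c xc)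
  have "uniform_limit {c<..} (\<lambda>N a. \<Sum>i<N. series_term x r (Suc i) a)
               (\<lambda>a. \<Sum>i. series_term x r (Suc i) a) sequentially"
  proof (rule Weierstrass_m_test_ev[OF _ summable])
    show "\<forall>\<^sub>F n in sequentially. \<forall>a\<in>{c<..}.
            norm (series_term x r (Suc n) a) \<le> majorant x c r (Suc n) * bell_Y r (harm_arg_bound c)"
      using series_term_bound[OF c] by (intro always_eventually) auto
  qed
  then show ?thesis unfolding uniformly_convergent_on_def by blast
qed


section \<open>The case \<open>r = 0\<close>: a series for \<open>\<psi>(a) - \<psi>(a - x)\<close>\<close>

text \<open>For \<open>r = 0\<close> the series is \<open>-F(a)\<close> with \<open>F(a) = \<Sum>\<^sub>m (x)\<^sub>m\<^sub>+\<^sub>1 / ((m+1) (a)\<^sub>m\<^sub>+\<^sub>1)\<close>.\<close>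
definition digamma_term :: "real \<Rightarrow> real \<Rightarrow> nat \<Rightarrow> real" where
  "digamma_term x a m = pochhammer x (Suc m) / (real (Suc m) * pochhammer a (Suc m))"

definition digamma_series :: "real \<Rightarrow> real \<Rightarrow> real" where
  "digamma_series x a = (\<Sum>m. digamma_term x a m)"

lemma series_term_0: "series_term x 0 (Suc m) a = - digamma_term x a m"
  by (simp add: series_term_def bell_Y_0 digamma_term_def)

text \<open>Absolute convergence is the case \<open>r = 0\<close>, \<open>c = a\<close> of the majorant.\<close>
lemma digamma_term_abs_summable:
  assumes a: "a > 0" and xa: "x < a"
  shows "summable (\<lambda>m. \<bar>digamma_term x a m\<bar>)"
proof -
  have "majorant x a 0 (Suc m) = \<bar>digamma_term x a m\<bar>" for m
    using pochhammer_pos[OF a, of "Suc m"]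
    by (simp add: majorant_def digamma_term_def abs_mult field_simps del: of_nat_Suc)
  then show ?thesis using majorant_summable[OF a xa, of 0] by simp
qed

lemma digamma_term_summable: "a > 0 \<Longrightarrow> x < a \<Longrightarrow> summable (digamma_term x a)"
  using digamma_term_abs_summable summable_rabs_cancel by blast

lemma pochhammer_ratio_tendsto:
  fixes a x :: real
  assumes a: "a > 0" and xa: "x < a"
  shows "(\<lambda>n. pochhammer x n / pochhammer a n) \<longlonglongrightarrow> 0"
proof -
  obtain A K where AK: "\<And>n. n \<ge> K \<Longrightarrow> \<bar>pochhammer x n\<bar> / pochhammer a n \<le> A * (a + n) powr (x - a)"
    using pochhammer_ratio_bound[OF a xa] by blast
  have "(\<lambda>n. A * (a + real n) powr (x - a)) \<longlonglongrightarrow> A * 0"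
    by (intro tendsto_intros tendsto_neg_powr
          filterlim_tendsto_add_at_top[OF tendsto_const filterlim_real_sequentially])
       (use xa in simp)
  then have lim: "(\<lambda>n. A * (a + real n) powr (x - a)) \<longlonglongrightarrow> 0" by simp
  show ?thesis
  proof (rule Lim_null_comparison[OF _ lim])
    show "\<forall>\<^sub>F n in sequentially. norm (pochhammer x n / pochhammer a n) \<le> A * (a + real n) powr (x - a)"
      unfolding eventually_sequentially
    proof (intro exI[of _ K] allI impI)
      fix n assume "K \<le> n"
      with AK pochhammer_pos[OF a, of n]
      show "norm (pochhammer x n / pochhammer a n) \<le> A * (a + real n) powr (x - a)" by simp
    qed
  qed
qed

text \<open>Telescoping gives \<open>\<Sum>\<^sub>n (x)\<^sub>n/(a+1)\<^sub>n = a/(a - x)\<close> (a case of Gauss's summation theorem).\<close>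
lemma pochhammer_ratio_shift_sums:
  fixes a x :: real
  assumes a: "a > 0" and xa: "x < a"
  shows "(\<lambda>n. pochhammer x n / pochhammer (a + 1) n) sums (a / (a - x))"
proof -
  define w where "w n = a * (pochhammer x n / pochhammer a n)" for n
  have step: "w (Suc n) - w n = (x - a) * (pochhammer x n / pochhammer (a + 1) n)" for n
  proof -
    have P: "pochhammer a n > 0" using a by (rule pochhammer_pos)
    have an: "a + real n > 0" using a by simp
    have "a * pochhammer (a + 1) n = (a + n) * pochhammer a n"
      using pochhammer_rec[of a n] pochhammer_rec'[of a n] by simp
    then have Q: "pochhammer (a + 1) n = (a + real n) * pochhammer a n / a"
      using a by (simp add: field_simps)
    have "w (Suc n) = a * (pochhammer x n * (x + n) / ((a + n) * pochhammer a n))"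
      by (simp add: w_def pochhammer_rec' mult_ac)
    also have "\<dots> = pochhammer x n * (x + n) / pochhammer (a + 1) n"
    proof -
      have "a' * (u / (s * P')) = u / (s * P' / a')" if "a' > 0" "s > 0" "P' > 0" for a' s P' u :: real
        using that by (simp add: field_simps)
      then show ?thesis unfolding Q using a an P by blast
    qed
    finally have w_Suc: "w (Suc n) = pochhammer x n * (x + n) / pochhammer (a + 1) n" .
    have w_n: "w n = pochhammer x n * (a + n) / pochhammer (a + 1) n"
    proof -
      have "a' * (u / P') = u * s / (s * P' / a')" if "a' > 0" "s > 0" "P' > 0" for a' s P' u :: real
        using that by (simp add: field_simps)
      then show ?thesis unfolding Q w_def using a an P by blast
    qed
    have "pochhammer (a + 1) n > 0" using a by (intro pochhammer_pos) simp
    then show ?thesis unfolding w_Suc w_n by (simp add: field_simps)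
  qed
  have "w \<longlonglongrightarrow> a * 0" unfolding w_def by (intro tendsto_intros pochhammer_ratio_tendsto a xa)
  then have "(\<lambda>n. w (Suc n) - w n) sums (0 - w 0)" by (intro telescope_sums) simp
  then have "(\<lambda>n. (x - a) * (pochhammer x n / pochhammer (a + 1) n)) sums (- a)"
    unfolding step by (simp add: w_def)
  then have "(\<lambda>n. 1 / (x - a) * ((x - a) * (pochhammer x n / pochhammer (a + 1) n))) sums
               (1 / (x - a) * (- a))"
    by (rule sums_mult)
  moreover have "1 / (x - a) * (- a) = a / (a - x)" using xa by (simp add: field_simps)
  ultimately show ?thesis using xa by simp
qed

lemma digamma_term_shift:
  assumes a: "a > 0"
  shows "digamma_term x a m - digamma_term x (a + 1) m =
           1 / a * (pochhammer x (Suc m) / pochhammer (a + 1) (Suc m))"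
proof -
  let ?n = "Suc m"
  have P: "pochhammer a ?n > 0" using a by (rule pochhammer_pos)
  have an: "a + real ?n > 0" using a by simp
  have "a * pochhammer (a + 1) ?n = (a + real ?n) * pochhammer a ?n"
    using pochhammer_rec[of a ?n] pochhammer_rec'[of a ?n] by simp
  then have Q: "pochhammer (a + 1) ?n = (a + real ?n) * pochhammer a ?n / a"
    using a by (simp add: field_simps)
  have "p / (k * P') - p / (k * ((b + k) * P' / b)) = 1 / b * (p / ((b + k) * P' / b))"
    if "b > 0" "k > 0" "P' > 0" for p k P' b :: real
  proof -
    have "P' * b + P' * k > 0" "P' * (b * k) + P' * (k * k) > 0" "b + k > 0"
      using that by (auto intro!: add_pos_pos mult_pos_pos)
    then have "P' * b + P' * k \<noteq> 0" "P' * (b * k) + P' * (k * k) \<noteq> 0" "b + k \<noteq> 0" by auto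
    then show ?thesis using that by (simp add: field_simps)
  qed
  from this[of a "real ?n" "pochhammer a ?n" "pochhammer x ?n"] a P
  show ?thesis unfolding digamma_term_def Q by simp
qed

lemma digamma_series_step:
  assumes a: "a > 0" and xa: "x < a"
  shows "digamma_series x a - digamma_series x (a + 1) = 1 / (a - x) - 1 / a"
proof -
  have "(\<lambda>m. pochhammer x (Suc m) / pochhammer (a + 1) (Suc m)) sums (a / (a - x) - 1)"
    using pochhammer_ratio_shift_sums[OF a xa] by (subst sums_Suc_iff) simp
  from sums_mult[OF this, of "1 / a"]
  have "(\<lambda>m. digamma_term x a m - digamma_term x (a + 1) m) sums (1 / a * (a / (a - x) - 1))"
    using digamma_term_shift[OF a] by simp
  moreover have "(\<lambda>m. digamma_term x a m - digamma_term x (a + 1) m) sums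
                   (digamma_series x a - digamma_series x (a + 1))"
    unfolding digamma_series_def using a xa by (intro sums_diff summable_sums digamma_term_summable) auto
  ultimately have "digamma_series x a - digamma_series x (a + 1) = 1 / a * (a / (a - x) - 1)"
    by (rule sums_unique2[rotated])
  also have "\<dots> = 1 / (a - x) - 1 / a" using a xa by (simp add: field_simps)
  finally show ?thesis .
qed

lemma digamma_series_iterate:
  assumes a: "a > 0" and xa: "x < a"
  shows "digamma_series x a - digamma_series x (a + real N) =
           (\<Sum>k<N. 1 / (a - x + real k) - 1 / (a + real k))"
proof (induction N)
  case 0
  then show ?case by simp
next
  case (Suc N)
  have "digamma_series x (a + real N) - digamma_series x (a + real N + 1) =
          1 / (a + real N - x) - 1 / (a + real N)"
    by (rule digamma_series_step) (use a xa in auto)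
  then show ?case using Suc.IH by (simp add: algebra_simps)
qed

text \<open>\<open>F(a + N) \<rightarrow> 0\<close>, since \<open>|F(a + N)| \<le> a/(a + N) \<Sum>\<^sub>m |(x)\<^sub>m\<^sub>+\<^sub>1| / ((m+1)(a)\<^sub>m\<^sub>+\<^sub>1)\<close>.\<close>
lemma digamma_series_tendsto_0:
  assumes a: "a > 0" and xa: "x < a"
  shows "(\<lambda>N. digamma_series x (a + real N)) \<longlonglongrightarrow> 0"
proof -
  define S where "S = (\<Sum>m. \<bar>digamma_term x a m\<bar>)"
  have bound: "\<bar>digamma_term x (a + real N) m\<bar> \<le> a / (a + real N) * \<bar>digamma_term x a m\<bar>" for N m
  proof -
    have aN: "a + real N > 0" using a by simp
    have p1: "pochhammer (a + 1) m > 0" using a by (intro pochhammer_pos) simp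
    have mono: "pochhammer (a + 1) m \<le> pochhammer (a + real N + 1) m"
      using a by (intro pochhammer_mono) auto
    have "\<bar>digamma_term x (a + real N) m\<bar> =
            \<bar>pochhammer x (Suc m)\<bar> / (real (Suc m) * ((a + real N) * pochhammer (a + real N + 1) m))"
      using aN p1 mono by (simp add: digamma_term_def pochhammer_rec abs_mult abs_divide)
    also have "\<dots> \<le> \<bar>pochhammer x (Suc m)\<bar> / (real (Suc m) * ((a + real N) * pochhammer (a + 1) m))"
      using aN p1 pochhammer_pos[of "a + real N + 1" m]
      by (intro divide_left_mono mult_left_mono mono mult_pos_pos) auto
    also have "\<dots> = a / (a + real N) * \<bar>digamma_term x a m\<bar>"
      using a aN p1 by (simp add: digamma_term_def pochhammer_rec abs_mult abs_divide)
    finally show ?thesis .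
  qed
  have lim: "(\<lambda>N. a * S * inverse (a + real N)) \<longlonglongrightarrow> 0"
    using tendsto_mult_left[OF tendsto_inverse_0_at_top[OF
            filterlim_tendsto_add_at_top[OF tendsto_const filterlim_real_sequentially]], of "a * S" a]
    by simp
  show ?thesis
  proof (rule Lim_null_comparison[OF always_eventually lim], intro allI)
    fix N
    have summable: "summable (\<lambda>m. \<bar>digamma_term x (a + real N) m\<bar>)"
      using a xa by (intro digamma_term_abs_summable) auto
    have "norm (digamma_series x (a + real N)) \<le> (\<Sum>m. \<bar>digamma_term x (a + real N) m\<bar>)"
      unfolding digamma_series_def real_norm_def by (rule summable_rabs[OF summable])
    also have "\<dots> \<le> (\<Sum>m. a / (a + real N) * \<bar>digamma_term x a m\<bar>)"
      using bound summable digamma_term_abs_summable[OF a xa] by (intro suminf_le summable_mult) auto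
    also have "\<dots> = a / (a + real N) * S"
      unfolding S_def by (rule suminf_mult[OF digamma_term_abs_summable[OF a xa]])
    finally show "norm (digamma_series x (a + real N)) \<le> a * S * inverse (a + real N)"
      by (simp add: divide_inverse mult_ac)
  qed
qed

lemma digamma_diff_sums:
  assumes a: "a > 0" and xa: "x < a"
  shows "(\<lambda>k. 1 / (a - x + real k) - 1 / (a + real k)) sums (Digamma a - Digamma (a - x))"
proof -
  have Digamma_a: "(\<lambda>k. inverse (of_nat (Suc k)) - inverse (a + of_nat k)) sums (Digamma a + euler_mascheroni)"
    using summable_Digamma[of a] a by (simp add: Digamma_def summable_sums)
  have Digamma_ax: "(\<lambda>k. inverse (of_nat (Suc k)) - inverse ((a - x) + of_nat k)) sums
                   (Digamma (a - x) + euler_mascheroni)"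
    using summable_Digamma[of "a - x"] xa by (simp add: Digamma_def summable_sums)
  from sums_diff[OF Digamma_a Digamma_ax] show ?thesis by (simp add: divide_inverse)
qed

lemma polygamma_0_diff_sums:
  assumes a: "a > 0" and xa: "x < a"
  shows "(\<lambda>m. series_term x 0 (Suc m) a) sums (Polygamma 0 (a - x) - Polygamma 0 a)"
proof -
  have "(\<lambda>N. digamma_series x a - digamma_series x (a + real N)) \<longlonglongrightarrow> digamma_series x a - 0"
    by (intro tendsto_intros digamma_series_tendsto_0 a xa)
  moreover have "(\<lambda>N. digamma_series x a - digamma_series x (a + real N)) \<longlonglongrightarrow> Digamma a - Digamma (a - x)"
    using digamma_diff_sums[OF a xa] unfolding sums_def digamma_series_iterate[OF a xa] .
  ultimately have "digamma_series x a - 0 = Digamma a - Digamma (a - x)"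
    by (rule LIMSEQ_unique)
  moreover have "digamma_term x a sums digamma_series x a"
    unfolding digamma_series_def by (intro summable_sums digamma_term_summable a xa)
  ultimately have "(\<lambda>m. - digamma_term x a m) sums (- (Digamma a - Digamma (a - x)))"
    by (intro sums_minus) simp
  then show ?thesis by (simp add: series_term_0)
qed


section \<open>Termwise differentiation and the main theorem\<close>

lemma polygamma_diff_deriv:
  fixes a x :: real
  assumes a: "a > 0" and xa: "x < a"
  shows "((\<lambda>b. Polygamma r (b - x) - Polygamma r b) has_field_derivative
            Polygamma (Suc r) (a - x) - Polygamma (Suc r) a) (at a)"
proof -
  have nonpos: "a - x \<notin> \<int>\<^sub>\<le>\<^sub>0" "a \<notin> \<int>\<^sub>\<le>\<^sub>0"
    using nonpos_Ints_nonpos[of "a - x"] nonpos_Ints_nonpos[of a] a xa by force+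
  have "(Polygamma r has_field_derivative Polygamma (Suc r) (a - x)) (at (a - x))"
    by (rule has_field_derivative_Polygamma[OF nonpos(1)])
  moreover have "((\<lambda>b. b - x) has_field_derivative 1) (at a)"
    by (auto intro!: derivative_eq_intros)
  ultimately have "((\<lambda>b. Polygamma r (b - x)) has_field_derivative Polygamma (Suc r) (a - x) * 1) (at a)"
    by (rule DERIV_chain2)
  then show ?thesis
    using has_field_derivative_Polygamma[OF nonpos(2)] by (auto intro: DERIV_diff)
qed

lemma series_termwise_deriv:
  assumes c: "c > 0" "x < c" and a: "c < a"
    and summable: "summable (\<lambda>n. series_term x r (Suc n) a)"
  shows "((\<lambda>b. \<Sum>n. series_term x r (Suc n) b) has_field_derivative
            (\<Sum>n. series_term x (Suc r) (Suc n) a)) (at a)"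
    and "summable (\<lambda>n. series_term x (Suc r) (Suc n) a)"
proof -
  let ?S = "{c<..}"
  have deriv: "((\<lambda>a. series_term x r (Suc n) a) has_field_derivative series_term x (Suc r) (Suc n) b)
                  (at b within ?S)" if "b \<in> ?S" for n b
    using that c by (intro has_field_derivative_at_within[OF series_term_deriv]) auto
  have uniform: "uniformly_convergent_on ?S (\<lambda>N a. \<Sum>i<N. series_term x (Suc r) (Suc i) a)"
    using c by (rule series_uniformly_convergent)
  have a_in: "a \<in> ?S" "a \<in> interior ?S" using a by (simp_all add: interior_open)
  show "((\<lambda>b. \<Sum>n. series_term x r (Suc n) b) has_field_derivative
          (\<Sum>n. series_term x (Suc r) (Suc n) a)) (at a)"
    by (rule has_field_derivative_series'(2)[OF convex_real_interval(3) deriv uniform a_in(1) summable a_in(2)])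
  from uniformly_convergent_imp_convergent[OF uniform a_in(1)]
  show "summable (\<lambda>n. series_term x (Suc r) (Suc n) a)"
    by (simp add: summable_iff_convergent)
qed

text \<open>The main identity, by induction on \<open>r\<close>: both sides of the \<open>r\<close>-th identity agree on the
  open set \<open>{c<..}\<close>, so their derivatives at \<open>a\<close> agree as well.\<close>
lemma polygamma_diff_sums:
  assumes "a > 0" and "x < a"
  shows "(\<lambda>m. series_term x r (Suc m) a) sums (Polygamma r (a - x) - Polygamma r a)"
  using assms
proof (induction r arbitrary: a)
  case 0
  then show ?case by (rule polygamma_0_diff_sums)
next
  case (Suc r)
  define c where "c = (max 0 x + a) / 2"
  have c: "c > 0" "x < c" "c < a" using Suc.prems by (auto simp: c_def)
  have summable: "summable (\<lambda>n. series_term x r (Suc n) a)"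
    using Suc.IH Suc.prems by (auto simp: sums_iff)
  have "\<forall>\<^sub>F b in nhds a. (\<Sum>n. series_term x r (Suc n) b) = Polygamma r (b - x) - Polygamma r b"
  proof (rule eventually_nhds_in_open[of "{c<..}", THEN eventually_mono])
    fix b assume "b \<in> {c<..}"
    then show "(\<Sum>n. series_term x r (Suc n) b) = Polygamma r (b - x) - Polygamma r b"
      using Suc.IH[of b] c by (auto simp: sums_iff)
  qed (use c in auto)
  from DERIV_cong_ev[OF refl this refl] series_termwise_deriv(1)[OF c summable]
  have "((\<lambda>b. Polygamma r (b - x) - Polygamma r b) has_field_derivative
           (\<Sum>n. series_term x (Suc r) (Suc n) a)) (at a)"
    by simp
  from DERIV_unique[OF this polygamma_diff_deriv[OF Suc.prems]]
  show ?case using series_termwise_deriv(2)[OF c summable] by (simp add: sums_iff)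
qed

theorem mainTheorem13:
  fixes a x :: real and r :: nat
  assumes "a > 0" and "x < a"
  shows "(\<lambda>m. let n = Suc m in
            - (1 / real n) * (pochhammer x n / pochhammer a n) *
              bell_Y r (\<lambda>j. (-1) ^ j * fact (j - 1) * gen_harm n j a))
         sums (Polygamma r (a - x) - Polygamma r a)"
  using polygamma_diff_sums[OF assms, of r]
  by (simp add: series_term_def harm_arg_def[abs_def] Let_def)

end
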